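(* Let $\bar A=\{A_i\}$ be a partition with $A_j\in(P_j,Q_j)$ for all $j$, and let $x\in(P_i,Q_i)$. Then it is impossible to have simultaneously $T_ix\in[A_{\rho(i)+1},Q_{\rho(i)+1})$ and $T_{i-1}x\in(P_{\theta(i-1)},A_{\theta(i-1)}]$.
   Context: Setting. Fix $g\ge 2$; indices are mod $8g-4$. Let $\mathcal F$ be the regular hyperbolic $(8g-4)$-gon in the unit disk centered at $0$ with all interior angles $\pi/2$, sides labeled $1,\dots,8g-4$ counterclockwise, side $i$ joining vertices $V_i$ and $V_{i+1}$. The complete geodesic extending side $i$ goes from $P_i$ (beyond $V_i$) to $Q_{i+1}$ (beyond $V_{i+1}$) on the unit circle; counterclockwise order $P_1,Q_1,P_2,Q_2,\dots,P_{8g-4},Q_{8g-4}$. $\sigma(i)=4g-i$ ($i$ odd), $\sigma(i)=2-i$ ($i$ even), $\rho(i)=\sigma(i)+1$, $\theta(i)=\sigma(i)-1$. $T_i$ is the Möbius transformation mapping side $i$ onto side $\sigma(i)$, with isometric circle the geodesic $P_iQ_{i+1}$, mapped onto the geodesic $Q_{\sigma(i)+1}P_{\sigma(i)}$, inside to outside. Arcs $[A,B)$, $(A,B]$, $(A,B)$ are counterclockwise from $A$ to $B$. *)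

theory Defs
  imports "HOL-Analysis.Analysis"
begin

definition nsides :: "int \<Rightarrow> int" where
  "nsides g = 8 * g - 4"

definition idx :: "int \<Rightarrow> int \<Rightarrow> int" where
  "idx g k = ((k - 1) mod nsides g) + 1"

definition sigma :: "int \<Rightarrow> int \<Rightarrow> int" where
  "sigma g i = (if odd i then 4 * g - i else 2 - i)"

definition rho :: "int \<Rightarrow> int \<Rightarrow> int" where
  "rho g i = sigma g i + 1"

definition theta :: "int \<Rightarrow> int \<Rightarrow> int" where
  "theta g i = sigma g i - 1"

(* direction (argument) of the perpendicular from 0 to side i;
   vertex V_k sits at argument 2 pi (k-1)/N, so side i (from V_i to V_(i+1))
   has its midpoint at argument 2 pi (i - 1/2)/N *)
definition side_dir :: "int \<Rightarrow> int \<Rightarrow> real" where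
  "side_dir g i = 2 * pi * (real_of_int i - 1/2) / real_of_int (nsides g)"

(* cosh h, sinh h, where h = hyperbolic distance from 0 to each side of the
   regular N-gon with interior angles pi/2: cosh h = cos(pi/4)/sin(pi/N) *)
definition ch :: "int \<Rightarrow> real" where
  "ch g = 1 / (sqrt 2 * sin (pi / real_of_int (nsides g)))"

definition sh :: "int \<Rightarrow> real" where
  "sh g = sqrt ((ch g)\<^sup>2 - 1)"

(* half the angular width of the ideal endpoints of a side geodesic:
   cos beta = tanh h *)
definition beta :: "int \<Rightarrow> real" where
  "beta g = arccos (sh g / ch g)"

(* endpoints on the unit circle of the geodesic extending side i:
   P_i beyond V_i, Q_(i+1) beyond V_(i+1) *)
definition Pt :: "int \<Rightarrow> int \<Rightarrow> complex" where
  "Pt g i = cis (side_dir g i - beta g)"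

definition Qt :: "int \<Rightarrow> int \<Rightarrow> complex" where
  "Qt g i = cis (side_dir g (i - 1) + beta g)"

(* hyperbolic translation along the real diameter by 2h; its isometric circle
   is the geodesic at distance h from 0 perpendicular to direction pi, which it
   maps onto the geodesic perpendicular to direction 0 *)
definition transl :: "int \<Rightarrow> complex \<Rightarrow> complex" where
  "transl g z = (z * of_real (ch g) + of_real (sh g)) / (z * of_real (sh g) + of_real (ch g))"

(* T_i: the Moebius transformation mapping side i onto side sigma(i), with
   isometric circle P_i Q_(i+1), mapped onto Q_(sigma(i)+1) P_(sigma(i)) *)
definition Tmap :: "int \<Rightarrow> int \<Rightarrow> complex \<Rightarrow> complex" where
  "Tmap g i z = cis (side_dir g (sigma g i)) * transl g (cis (pi - side_dir g i) * z)"

definition ccw_angle :: "complex \<Rightarrow> complex \<Rightarrow> real" where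
  "ccw_angle a z = (if Arg (z / a) < 0 then Arg (z / a) + 2 * pi else Arg (z / a))"

definition arc_oo :: "complex \<Rightarrow> complex \<Rightarrow> complex set" where
  "arc_oo a b = {z. cmod z = 1 \<and> 0 < ccw_angle a z \<and> ccw_angle a z < ccw_angle a b}"

definition arc_co :: "complex \<Rightarrow> complex \<Rightarrow> complex set" where
  "arc_co a b = {z. cmod z = 1 \<and> ccw_angle a z < ccw_angle a b}"

definition arc_oc :: "complex \<Rightarrow> complex \<Rightarrow> complex set" where
  "arc_oc a b = {z. cmod z = 1 \<and> 0 < ccw_angle a z \<and> ccw_angle a z \<le> ccw_angle a b}"

end

theory Submission
  imports Defs
begin

text \<open>Write \<open>d = 2\<pi>/(8g - 4)\<close> for the central angle of a side and \<open>\<beta>\<close> for the angular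
  half-width of the ideal endpoints of a side geodesic. After a rotation both \<open>T\<^sub>i\<close> and
  \<open>T\<^sub>i\<^sub>-\<^sub>1\<close> act on the circle as one hyperbolic translation, which in the coordinate
  \<open>tan(\<phi>/2)\<close> is multiplication by \<open>k = tan\<^sup>2(\<beta>/2)\<close>. Writing \<open>x\<close> at angle \<open>\<alpha>\<close>
  relative to side \<open>i\<close>, the two arc conditions force \<open>tan(d - \<beta>/2) < k tan(\<alpha>/2)\<close> and
  \<open>tan(d - \<beta>/2) < k tan(\<pi> - (\<alpha> + d)/2)\<close>. The two angles sum to \<open>\<pi> - d/2\<close>, so one of
  them is at most \<open>\<pi>/2 - d/4\<close>, giving \<open>k > tan(d/4) tan(d - \<beta>/2)\<close>; but an explicit
  estimate shows \<open>k \<le> tan(d/4) tan(d - \<beta>/2)\<close>.\<close>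

lemma cis_Arg_of_norm_1: "cmod z = 1 \<Longrightarrow> cis (Arg z) = z"
  using cis_Arg[of z] by (cases "z = 0") (auto simp: sgn_div_norm)

lemma ccw_angle_cis:
  assumes "cmod z = 1" "-pi < s" "s \<le> pi"
  shows "ccw_angle (cis s) z = (if s \<le> Arg z then Arg z - s else Arg z - s + 2 * pi)"
proof -
  define e where "e = Arg z - s"
  have quotient: "z / cis s = cis e"
    unfolding e_def by (subst cis_Arg_of_norm_1[OF assms(1), symmetric]) (simp add: cis_divide)
  have Arg_z: "-pi < Arg z" "Arg z \<le> pi" using Arg_bounded by auto
  have "Arg (z / cis s) = (if e \<le> pi then (if -pi < e then e else e + 2 * pi) else e - 2 * pi)"
  proof -
    consider "-pi < e" "e \<le> pi" | "pi < e" | "e \<le> -pi" by linarith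
    then show ?thesis
    proof cases
      case 1
      then show ?thesis using quotient Arg_cis by auto
    next
      case 2
      have "cis e = cis (e - 2 * pi)" by (simp add: complex_eq_iff cos_diff sin_diff)
      moreover have "Arg (cis (e - 2 * pi)) = e - 2 * pi"
        using 2 Arg_z assms e_def by (intro Arg_cis) auto
      ultimately show ?thesis using 2 quotient by auto
    next
      case 3
      have "cis e = cis (e + 2 * pi)" by (simp add: complex_eq_iff)
      moreover have "Arg (cis (e + 2 * pi)) = e + 2 * pi"
        using 3 Arg_z assms e_def by (intro Arg_cis) auto
      moreover have "e \<le> pi" "\<not> -pi < e" using 3 pi_gt_zero by linarith+
      ultimately show ?thesis using quotient by simp
    qed
  qed
  then show ?thesis unfolding ccw_angle_def using Arg_z assms e_def by auto
qed

lemma ccw_angle_cis_cis: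
  assumes "-pi < s" "s < t" "t \<le> pi"
  shows "ccw_angle (cis s) (cis t) = t - s"
  using ccw_angle_cis[of "cis t" s] Arg_cis[of t] assms by simp

lemma arc_oo_cisD:
  assumes "-pi < s" "s < t" "t \<le> pi" "z \<in> arc_oo (cis s) (cis t)"
  shows "z = cis (Arg z) \<and> s < Arg z \<and> Arg z < t"
  using assms ccw_angle_cis[of z s] ccw_angle_cis_cis[OF assms(1-3)] Arg_bounded[of z]
    cis_Arg_of_norm_1[of z]
  unfolding arc_oo_def by (auto split: if_splits)

lemma arc_co_cisD:
  assumes "-pi < s" "s < t" "t \<le> pi" "z \<in> arc_co (cis s) (cis t)"
  shows "z = cis (Arg z) \<and> s \<le> Arg z \<and> Arg z < t"
  using assms ccw_angle_cis[of z s] ccw_angle_cis_cis[OF assms(1-3)] Arg_bounded[of z]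
    cis_Arg_of_norm_1[of z]
  unfolding arc_co_def by (auto split: if_splits)

lemma arc_oc_cisD:
  assumes "-pi < s" "s < t" "t \<le> pi" "z \<in> arc_oc (cis s) (cis t)"
  shows "z = cis (Arg z) \<and> s < Arg z \<and> Arg z \<le> t"
  using assms ccw_angle_cis[of z s] ccw_angle_cis_cis[OF assms(1-3)] Arg_bounded[of z]
    cis_Arg_of_norm_1[of z]
  unfolding arc_oc_def by (auto split: if_splits)

lemma ccw_angle_mult_left: "c \<noteq> 0 \<Longrightarrow> ccw_angle (c * a) (c * z) = ccw_angle a z"
  unfolding ccw_angle_def by simp

lemma arc_oo_mult_left:
  assumes "cmod c = 1" shows "c * z \<in> arc_oo (c * a) (c * b) \<longleftrightarrow> z \<in> arc_oo a b"
proof -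
  have "c \<noteq> 0" using assms by auto
  then show ?thesis unfolding arc_oo_def using assms by (simp add: ccw_angle_mult_left norm_mult)
qed

lemma arc_co_mult_left:
  assumes "cmod c = 1" shows "c * z \<in> arc_co (c * a) (c * b) \<longleftrightarrow> z \<in> arc_co a b"
proof -
  have "c \<noteq> 0" using assms by auto
  then show ?thesis unfolding arc_co_def using assms by (simp add: ccw_angle_mult_left norm_mult)
qed

lemma arc_oc_mult_left:
  assumes "cmod c = 1" shows "c * z \<in> arc_oc (c * a) (c * b) \<longleftrightarrow> z \<in> arc_oc a b"
proof -
  have "c \<noteq> 0" using assms by auto
  then show ?thesis unfolding arc_oc_def using assms by (simp add: ccw_angle_mult_left norm_mult)
qed

lemma arc_oo_rotated_cisE:
  assumes "cmod c = 1" "-pi < s" "s < t" "t \<le> pi" "z \<in> arc_oo (c * cis s) (c * cis t)"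
  obtains \<phi> where "z = c * cis \<phi>" "s < \<phi>" "\<phi> < t"
proof -
  have c: "c \<noteq> 0" using assms(1) by auto
  have "c * (z / c) \<in> arc_oo (c * cis s) (c * cis t)" using assms(5) c by simp
  then have "z / c \<in> arc_oo (cis s) (cis t)" using arc_oo_mult_left[OF assms(1)] by blast
  then have "z / c = cis (Arg (z / c))" "s < Arg (z / c)" "Arg (z / c) < t"
    using arc_oo_cisD[OF assms(2-4)] by auto
  with c show thesis by (intro that[of "Arg (z / c)"]) (auto simp: divide_eq_eq mult.commute)
qed

lemma arc_co_rotated_cisE:
  assumes "cmod c = 1" "-pi < s" "s < t" "t \<le> pi"
    and "a \<in> arc_oo (c * cis s) (c * cis t)" "z \<in> arc_co a (c * cis t)"
  obtains \<phi> where "z = c * cis \<phi>" "s < \<phi>" "\<phi> < t"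
proof -
  obtain \<alpha> where a: "a = c * cis \<alpha>" "s < \<alpha>" "\<alpha> < t"
    using arc_oo_rotated_cisE[OF assms(1-5)] .
  have c: "c \<noteq> 0" using assms(1) by auto
  have "c * (z / c) \<in> arc_co (c * cis \<alpha>) (c * cis t)" using assms(6) a c by simp
  then have "z / c \<in> arc_co (cis \<alpha>) (cis t)" using arc_co_mult_left[OF assms(1)] by blast
  then have "z / c = cis (Arg (z / c))" "\<alpha> \<le> Arg (z / c)" "Arg (z / c) < t"
    using arc_co_cisD[of \<alpha> t] a assms(2-4) by auto
  with a c show thesis by (intro that[of "Arg (z / c)"]) (auto simp: divide_eq_eq mult.commute)
qed

lemma arc_oc_rotated_cisE:
  assumes "cmod c = 1" "-pi < s" "s < t" "t \<le> pi"
    and "a \<in> arc_oo (c * cis s) (c * cis t)" "z \<in> arc_oc (c * cis s) a"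
  obtains \<phi> where "z = c * cis \<phi>" "s < \<phi>" "\<phi> < t"
proof -
  obtain \<alpha> where a: "a = c * cis \<alpha>" "s < \<alpha>" "\<alpha> < t"
    using arc_oo_rotated_cisE[OF assms(1-5)] .
  have c: "c \<noteq> 0" using assms(1) by auto
  have "c * (z / c) \<in> arc_oc (c * cis s) (c * cis \<alpha>)" using assms(6) a c by simp
  then have "z / c \<in> arc_oc (cis s) (cis \<alpha>)" using arc_oc_mult_left[OF assms(1)] by blast
  then have "z / c = cis (Arg (z / c))" "s < Arg (z / c)" "Arg (z / c) \<le> \<alpha>"
    using arc_oc_cisD[of s \<alpha>] a assms(2-4) by auto
  with a c show thesis by (intro that[of "Arg (z / c)"]) (auto simp: divide_eq_eq mult.commute)
qed

definition central_angle :: "int \<Rightarrow> real" where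
  "central_angle g = 2 * pi / real_of_int (nsides g)"

lemma central_angle_pos: "g \<ge> 2 \<Longrightarrow> 0 < central_angle g"
  unfolding central_angle_def nsides_def by simp

lemma central_angle_le: "g \<ge> 2 \<Longrightarrow> central_angle g \<le> pi / 6"
  unfolding central_angle_def nsides_def by (simp add: field_simps)

lemma central_angle_sq_less: "g \<ge> 2 \<Longrightarrow> (central_angle g)\<^sup>2 < 1 / 3"
proof -
  assume g: "g \<ge> 2"
  have "pi < 3.18" using pi_approx(2) by simp
  then have "central_angle g < 0.53" using central_angle_le[OF g] by linarith
  then have "(central_angle g)\<^sup>2 < 0.53\<^sup>2"
    using central_angle_pos[OF g] by (intro power_strict_mono) auto
  also have "(0.53::real)\<^sup>2 < 1 / 3" by (simp add: power2_eq_square)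
  finally show ?thesis .
qed

lemma ch_eq: "ch g = 1 / (sqrt 2 * sin (central_angle g / 2))"
  unfolding ch_def central_angle_def by simp

lemma ch_gt_1: "g \<ge> 2 \<Longrightarrow> 1 < ch g"
proof -
  assume g: "g \<ge> 2"
  have "0 < central_angle g / 2" "central_angle g / 2 < pi / 4"
    using central_angle_pos[OF g] central_angle_le[OF g] by auto
  then have s: "0 < sin (central_angle g / 2)" "sin (central_angle g / 2) < sqrt 2 / 2"
    using pi_gt3 by (auto intro!: sin_gt_zero simp add: sin_mono_less_eq simp flip: sin_45)
  have "sqrt 2 * sin (central_angle g / 2) < sqrt 2 * (sqrt 2 / 2)"
    using s(2) by (intro mult_strict_left_mono) auto
  then show ?thesis unfolding ch_eq using s(1) by (simp add: field_simps)
qed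

lemma ch_sq_ge: "g \<ge> 2 \<Longrightarrow> 2 / (central_angle g)\<^sup>2 \<le> (ch g)\<^sup>2"
proof -
  assume g: "g \<ge> 2"
  define d where "d = central_angle g"
  have d: "0 < d" "d \<le> pi / 6" unfolding d_def using central_angle_pos[OF g] central_angle_le[OF g] by auto
  have s: "0 < sin (d / 2)" using d pi_gt3 by (intro sin_gt_zero) auto
  moreover have "sin (d / 2) \<le> d / 2" using d by (intro sin_x_le_x) auto
  ultimately have "(sin (d / 2))\<^sup>2 \<le> (d / 2)\<^sup>2" by (intro power_mono) auto
  then have le: "2 * (sin (d / 2))\<^sup>2 \<le> d\<^sup>2 / 2" by (simp add: power_divide)
  have "2 / d\<^sup>2 = 1 / (d\<^sup>2 / 2)" by simp
  also have "\<dots> \<le> 1 / (2 * (sin (d / 2))\<^sup>2)" using le s d by (intro divide_left_mono) auto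
  also have "\<dots> = (ch g)\<^sup>2" unfolding ch_eq d_def by (simp add: power_mult_distrib power_divide)
  finally show ?thesis unfolding d_def .
qed

lemma sh_sq: "g \<ge> 2 \<Longrightarrow> (sh g)\<^sup>2 = (ch g)\<^sup>2 - 1"
  unfolding sh_def using ch_gt_1[of g] by (simp add: one_less_power less_imp_le)

lemma sh_pos: "g \<ge> 2 \<Longrightarrow> 0 < sh g"
  unfolding sh_def using ch_gt_1[of g] by (simp add: one_less_power)

lemma sh_less_ch: "g \<ge> 2 \<Longrightarrow> sh g < ch g"
  using sh_sq[of g] sh_pos[of g] ch_gt_1[of g] by (intro power_less_imp_less_base[of "sh g" 2]) auto

lemma tanh_height_bounds: "g \<ge> 2 \<Longrightarrow> 0 < sh g / ch g \<and> sh g / ch g < 1"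
  using sh_pos[of g] sh_less_ch[of g] ch_gt_1[of g] by auto

lemma cos_beta: "g \<ge> 2 \<Longrightarrow> cos (beta g) = sh g / ch g"
  unfolding beta_def using tanh_height_bounds[of g] by (intro cos_arccos) auto

lemma sin_beta: "g \<ge> 2 \<Longrightarrow> sin (beta g) = 1 / ch g"
proof -
  assume g: "g \<ge> 2"
  have "sin (beta g) = sqrt (1 - (sh g / ch g)\<^sup>2)"
    unfolding beta_def using tanh_height_bounds[OF g] by (intro sin_arccos) auto
  also have "1 - (sh g / ch g)\<^sup>2 = (1 / ch g)\<^sup>2"
    using sh_sq[OF g] ch_gt_1[OF g] by (simp add: field_simps)
  finally show ?thesis using ch_gt_1[OF g] by simp
qed

lemma beta_bounds: "g \<ge> 2 \<Longrightarrow> 0 < beta g \<and> beta g < pi / 2"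
proof -
  assume g: "g \<ge> 2"
  have pos: "0 < beta g" "beta g \<le> pi / 2"
    unfolding beta_def using tanh_height_bounds[OF g] arccos_lt_bounded arccos_le_pi2 by auto
  moreover have "beta g \<noteq> pi / 2"
  proof
    assume "beta g = pi / 2"
    then have "cos (beta g) = 0" by (simp only: cos_pi_half)
    then show False using cos_beta[OF g] tanh_height_bounds[OF g] by linarith
  qed
  ultimately show ?thesis by simp
qed

lemma tan_half_beta: "g \<ge> 2 \<Longrightarrow> tan (beta g / 2) = 1 / (ch g + sh g)"
  using tan_half[of "beta g / 2"] sin_beta[of g] cos_beta[of g] ch_gt_1[of g] sh_pos[of g]
  by (simp add: field_simps)

lemma half_central_angle_less_beta: "g \<ge> 2 \<Longrightarrow> central_angle g / 2 < beta g"
proof -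
  assume g: "g \<ge> 2"
  define d where "d = central_angle g"
  have d: "0 < d" "d \<le> pi / 6" unfolding d_def using central_angle_pos[OF g] central_angle_le[OF g] by auto
  have s: "0 < sin (d / 2)" using d pi_gt3 by (intro sin_gt_zero) auto
  have "sin (d / 2) < sqrt 2 * sin (d / 2)" using s by simp
  also have "\<dots> = sin (beta g)" unfolding sin_beta[OF g] ch_eq d_def using s d_def by simp
  finally show ?thesis
    using d beta_bounds[OF g] pi_gt3 unfolding d_def[symmetric] by (subst (asm) sin_mono_less_eq) auto
qed

lemma beta_less_central_angle: "g \<ge> 2 \<Longrightarrow> beta g < central_angle g"
proof -
  assume g: "g \<ge> 2"
  define d where "d = central_angle g"
  have d: "0 < d" "d \<le> pi / 6" unfolding d_def using central_angle_pos[OF g] central_angle_le[OF g] by auto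
  have s: "0 < sin (d / 2)" using d pi_gt3 by (intro sin_gt_zero) auto
  have "sqrt 2 / 2 < cos (d / 2)" unfolding cos_45[symmetric] using d pi_gt3 by (intro cos_monotone_0_pi) auto
  then have "sin (beta g) < 2 * sin (d / 2) * cos (d / 2)"
    unfolding sin_beta[OF g] ch_eq d_def[symmetric] using s by (simp add: field_simps)
  also have "\<dots> = sin d" using sin_double[of "d / 2"] by simp
  finally show ?thesis
    using d beta_bounds[OF g] pi_gt3 unfolding d_def[symmetric] by (subst (asm) sin_mono_less_eq) auto
qed

lemma tan_half_beta_sq_le: "g \<ge> 2 \<Longrightarrow> (tan (beta g / 2))\<^sup>2 \<le> (central_angle g)\<^sup>2 / 7"
proof -
  assume g: "g \<ge> 2"
  define d where "d = central_angle g"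
  have d: "0 < d" "d\<^sup>2 < 1 / 3"
    unfolding d_def using central_angle_pos[OF g] central_angle_sq_less[OF g] by auto
  have "(ch g)\<^sup>2 + 3 * (sh g)\<^sup>2 \<le> (ch g + sh g)\<^sup>2"
    using sh_less_ch[OF g] sh_pos[OF g] by (simp add: power2_eq_square algebra_simps)
  then have "4 * (ch g)\<^sup>2 - 3 \<le> (ch g + sh g)\<^sup>2" using sh_sq[OF g] by simp
  moreover have "7 / d\<^sup>2 \<le> 4 * (ch g)\<^sup>2 - 3"
  proof -
    have "3 \<le> 1 / d\<^sup>2" using d by (simp add: field_simps)
    then show ?thesis using ch_sq_ge[OF g] unfolding d_def by simp
  qed
  ultimately have bound: "7 / d\<^sup>2 \<le> (ch g + sh g)\<^sup>2" by linarith
  have "(tan (beta g / 2))\<^sup>2 = 1 / (ch g + sh g)\<^sup>2"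
    unfolding tan_half_beta[OF g] by (simp add: power_divide)
  also have "\<dots> \<le> 1 / (7 / d\<^sup>2)"
    using bound d by (intro divide_left_mono mult_pos_pos) auto
  finally show ?thesis unfolding d_def by simp
qed

lemma le_tan: "0 \<le> x \<Longrightarrow> x < pi / 2 \<Longrightarrow> x \<le> tan x"
  using abs_tan_ge[of x] tan_pos_pi2_le[of x] by simp

text \<open>Here \<open>tan(\<beta>/2) \<approx> d/(2\<surd>2)\<close>, so the left side is about \<open>d\<^sup>2/8\<close> and the right side
  about \<open>d\<^sup>2 (1 - 1/(2\<surd>2))/4 > d\<^sup>2/7\<close>; the constants \<open>19/50\<close> and \<open>31/50\<close> below have room
  to spare.\<close>

lemma tan_half_beta_sq_le_tan_mult:
  assumes g: "g \<ge> 2"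
  shows "(tan (beta g / 2))\<^sup>2 \<le> tan (central_angle g / 4) * tan (central_angle g - beta g / 2)"
proof -
  define d b t where "d = central_angle g" and "b = beta g" and "t = tan (beta g / 2)"
  have d: "0 < d" "d \<le> pi / 6" unfolding d_def using central_angle_pos[OF g] central_angle_le[OF g] by auto
  have b: "0 < b" "b < d" unfolding b_def d_def using beta_bounds[OF g] beta_less_central_angle[OF g] by auto
  have t2: "t\<^sup>2 \<le> d\<^sup>2 / 7" unfolding t_def d_def by (rule tan_half_beta_sq_le[OF g])
  have "(19 / 50 * d)\<^sup>2 = 361 / 2500 * d\<^sup>2" by (simp add: power2_eq_square)
  then have "t\<^sup>2 \<le> (19 / 50 * d)\<^sup>2" using t2 zero_le_power2[of d] by linarith
  moreover have "0 \<le> 19 / 50 * d" using d by simp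
  ultimately have "t \<le> 19 / 50 * d" by (rule power2_le_imp_le)
  moreover have "b / 2 \<le> t" unfolding t_def b_def using b d pi_gt3 by (intro le_tan) (auto simp: b_def)
  ultimately have "31 / 50 * d \<le> d - b / 2" by linarith
  moreover have "d - b / 2 \<le> tan (d - b / 2)" using b d pi_gt3 by (intro le_tan) auto
  moreover have "d / 4 \<le> tan (d / 4)" using d pi_gt3 by (intro le_tan) auto
  ultimately have "d / 4 * (31 / 50 * d) \<le> tan (d / 4) * tan (d - b / 2)"
    using d by (intro mult_mono; linarith)
  moreover have "d\<^sup>2 / 7 \<le> d / 4 * (31 / 50 * d)" by (simp add: power2_eq_square)
  ultimately have "t\<^sup>2 \<le> tan (d / 4) * tan (d - b / 2)" using t2 by linarith
  then show ?thesis unfolding d_def b_def t_def .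
qed

lemma tan_half_eq_Im_div: "tan (t / 2) = Im (cis t) / (1 + Re (cis t))"
  using tan_half[of "t / 2"] by (simp add: add.commute)

lemma tan_half_translation:
  fixes c s \<alpha> \<phi> :: real
  assumes "c\<^sup>2 - s\<^sup>2 = 1" "0 < c" "0 \<le> s" "sin \<alpha> \<noteq> 0"
    and "(cis \<alpha> * c + s) / (cis \<alpha> * s + c) = cis \<phi>"
  shows "tan (\<phi> / 2) = tan (\<alpha> / 2) / (c + s)\<^sup>2"
proof -
  define p q where "p = cos \<alpha>" and "q = sin \<alpha>"
  have pq: "p\<^sup>2 + q\<^sup>2 = 1" unfolding p_def q_def by simp
  have "s < c" using assms(1-3) by (intro power_less_imp_less_base[of s 2]) auto
  moreover have "- s \<le> p * s" using assms(3) cos_ge_minus_one[of \<alpha>] unfolding p_def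
    by (metis minus_mult_left mult_1 mult_right_mono)
  ultimately have den: "0 < p * s + c" by linarith
  define D where "D = (p * s + c)\<^sup>2 + (q * s)\<^sup>2"
  have D: "0 < D" unfolding D_def using den by (simp add: add_pos_nonneg)
  have "cis \<alpha> * c + s = Complex (p * c + s) (q * c)" "cis \<alpha> * s + c = Complex (p * s + c) (q * s)"
    unfolding p_def q_def by (simp_all add: complex_eq_iff)
  then have w: "(cis \<alpha> * c + s) / (cis \<alpha> * s + c) = Complex (p * c + s) (q * c) / Complex (p * s + c) (q * s)"
    by simp
  have Re: "Re (cis \<phi>) = ((p * c + s) * (p * s + c) + q * c * (q * s)) / D"
    unfolding assms(5)[symmetric] w D_def by (simp add: Re_divide cmod_def power2_eq_square)
  have "Im (cis \<phi>) = (q * c * (p * s + c) - (p * c + s) * (q * s)) / D"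
    unfolding assms(5)[symmetric] w D_def by (simp add: Im_divide cmod_def power2_eq_square)
  also have "q * c * (p * s + c) - (p * c + s) * (q * s) = q * (c\<^sup>2 - s\<^sup>2)"
    by (simp add: algebra_simps power2_eq_square)
  finally have Im: "Im (cis \<phi>) = q / D" using assms(1) by simp
  have "D + ((p * c + s) * (p * s + c) + q * c * (q * s)) - (c + s)\<^sup>2 * (1 + p)
      = (p\<^sup>2 + q\<^sup>2 - 1) * (s\<^sup>2 + c * s)"
    unfolding D_def by (simp add: power2_eq_square algebra_simps)
  then have "1 + Re (cis \<phi>) = (c + s)\<^sup>2 * (1 + p) / D" unfolding Re using pq D by (simp add: field_simps)
  then have "tan (\<phi> / 2) = q / ((c + s)\<^sup>2 * (1 + p))"
    unfolding tan_half_eq_Im_div Im using D by simp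
  also have "\<dots> = tan (\<alpha> / 2) / (c + s)\<^sup>2"
    unfolding tan_half_eq_Im_div p_def q_def by (simp add: add.commute)
  finally show ?thesis .
qed

lemma tan_half_transl:
  assumes "g \<ge> 2" "sin \<alpha> \<noteq> 0" "transl g (cis \<alpha>) = cis \<phi>"
  shows "tan (\<phi> / 2) = (tan (beta g / 2))\<^sup>2 * tan (\<alpha> / 2)"
proof -
  have "(ch g)\<^sup>2 - (sh g)\<^sup>2 = 1" using sh_sq[OF assms(1)] by simp
  then have "tan (\<phi> / 2) = tan (\<alpha> / 2) / (ch g + sh g)\<^sup>2"
    using assms ch_gt_1[OF assms(1)] sh_pos[OF assms(1)] unfolding transl_def
    by (intro tan_half_translation) auto
  then show ?thesis unfolding tan_half_beta[OF assms(1)] by (simp add: power_divide)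
qed

lemma nsides_nonzero: "nsides g \<noteq> 0"
  unfolding nsides_def by presburger

lemma side_dir_add: "side_dir g (j + m) = side_dir g j + real_of_int m * central_angle g"
  unfolding side_dir_def central_angle_def using nsides_nonzero[of g] by (simp add: field_simps)

lemma Pt_add: "Pt g (j + m) = cis (side_dir g j) * cis (real_of_int m * central_angle g - beta g)"
  unfolding Pt_def side_dir_add by (simp add: cis_mult algebra_simps)

lemma Qt_add: "Qt g (j + m) = cis (side_dir g j) * cis (real_of_int (m - 1) * central_angle g + beta g)"
proof -
  have "Qt g (j + m) = cis (side_dir g (j + (m - 1)) + beta g)"
    unfolding Qt_def by (simp add: add_diff_eq)
  also have "\<dots> = cis (side_dir g j + (real_of_int (m - 1) * central_angle g + beta g))"
    unfolding side_dir_add by (simp add: add.assoc)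
  finally show ?thesis by (simp add: cis_mult)
qed

lemma cis_add_int_turns: "cis (x + real_of_int m * (real_of_int (nsides g) * central_angle g)) = cis x"
proof -
  have "cis (real_of_int m * (real_of_int (nsides g) * central_angle g)) = 1"
    using cis_multiple_2pi[of "real_of_int m"] nsides_nonzero[of g]
    unfolding central_angle_def by (simp add: mult.commute)
  then show ?thesis by (simp add: cis_mult[symmetric])
qed

lemma Pt_periodic: "Pt g (k + m * nsides g) = Pt g k"
  using Pt_add[of g k "m * nsides g"] Pt_add[of g k 0] cis_add_int_turns[of "- beta g" m g]
  by (simp add: algebra_simps)

lemma Qt_periodic: "Qt g (k + m * nsides g) = Qt g k"
  using Qt_add[of g k "m * nsides g"] Qt_add[of g k 0]
    cis_add_int_turns[of "beta g - central_angle g" m g]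
  by (simp add: algebra_simps)

lemma idx_eq: "idx g k = k + (- ((k - 1) div nsides g)) * nsides g"
  unfolding idx_def by (simp add: minus_div_mult_eq_mod[symmetric] algebra_simps)

lemma Pt_idx: "Pt g (idx g k) = Pt g k"
  unfolding idx_eq by (rule Pt_periodic)

lemma Qt_idx: "Qt g (idx g k) = Qt g k"
  unfolding idx_eq by (rule Qt_periodic)

lemma idx_mem: "g \<ge> 1 \<Longrightarrow> idx g k \<in> {1..nsides g}"
proof -
  assume "g \<ge> 1"
  then have "0 < nsides g" unfolding nsides_def by simp
  then have "0 \<le> (k - 1) mod nsides g" "(k - 1) mod nsides g < nsides g" by auto
  then show ?thesis unfolding idx_def by simp
qed

lemma arc_oo_idx:
  assumes "g \<ge> 1" "\<forall>j\<in>{1..nsides g}. A j \<in> arc_oo (Pt g j) (Qt g j)"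
  shows "A (idx g k) \<in> arc_oo (Pt g k) (Qt g k)"
  using assms idx_mem[OF assms(1)] Pt_idx Qt_idx by metis

lemma Tmap_rotated: "Tmap g j (cis (side_dir g j - pi) * w) = cis (side_dir g (sigma g j)) * transl g w"
  unfolding Tmap_def by (simp add: mult.assoc[symmetric] cis_mult)

lemma side_arc_cisE:
  assumes g: "g \<ge> 2" and x: "x \<in> arc_oo (Pt g i) (Qt g i)"
  obtains \<alpha> where "x = cis (side_dir g i - pi) * cis \<alpha>"
    "pi - beta g < \<alpha>" "\<alpha> < pi - central_angle g + beta g"
proof -
  define c where "c = cis (side_dir g i - pi)"
  have "Pt g i = c * cis (pi - beta g)" "Qt g i = c * cis (pi - central_angle g + beta g)"
    using Pt_add[of g i 0] Qt_add[of g i 0] unfolding c_def by (simp_all add: cis_mult)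
  then have x': "x \<in> arc_oo (c * cis (pi - beta g)) (c * cis (pi - central_angle g + beta g))"
    using x by simp
  have "-pi < pi - beta g" "pi - beta g < pi - central_angle g + beta g"
    "pi - central_angle g + beta g \<le> pi"
    using beta_bounds[OF g] half_central_angle_less_beta[OF g] beta_less_central_angle[OF g] by auto
  moreover have "cmod c = 1" unfolding c_def by simp
  ultimately obtain \<alpha> where "x = c * cis \<alpha>" "pi - beta g < \<alpha>" "\<alpha> < pi - central_angle g + beta g"
    using arc_oo_rotated_cisE x' by metis
  then show thesis using that unfolding c_def by blast
qed

lemma tan_bound_from_first_image:
  assumes g: "g \<ge> 2"
    and a: "a \<in> arc_oo (Pt g (rho g i + 1)) (Qt g (rho g i + 1))"
    and \<alpha>: "pi - beta g < \<alpha>" "\<alpha> < pi - central_angle g + beta g"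
    and image: "Tmap g i (cis (side_dir g i - pi) * cis \<alpha>) \<in> arc_co a (Qt g (rho g i + 1))"
  shows "tan (central_angle g - beta g / 2) < (tan (beta g / 2))\<^sup>2 * tan (\<alpha> / 2)"
proof -
  define d b c where "d = central_angle g" and "b = beta g" and "c = cis (side_dir g (sigma g i))"
  have bounds: "0 < b" "b < pi / 2" "d / 2 < b" "b < d" "d \<le> pi / 6"
    unfolding b_def d_def using beta_bounds[OF g] half_central_angle_less_beta[OF g]
      beta_less_central_angle[OF g] central_angle_le[OF g] by auto
  have "Pt g (rho g i + 1) = c * cis (2 * d - b)" and Q: "Qt g (rho g i + 1) = c * cis (d + b)"
    using Pt_add[of g "sigma g i" 2] Qt_add[of g "sigma g i" 2]
    unfolding rho_def c_def d_def b_def by (simp_all add: add.assoc)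
  then have a': "a \<in> arc_oo (c * cis (2 * d - b)) (c * cis (d + b))" using a by simp
  have image': "c * transl g (cis \<alpha>) \<in> arc_co a (c * cis (d + b))"
    using image unfolding Tmap_rotated Q c_def .
  have "-pi < 2 * d - b" "2 * d - b < d + b" "d + b \<le> pi" using bounds pi_gt3 by auto
  moreover have "cmod c = 1" unfolding c_def by simp
  ultimately obtain \<phi> where \<phi>: "c * transl g (cis \<alpha>) = c * cis \<phi>" "2 * d - b < \<phi>" "\<phi> < d + b"
    using arc_co_rotated_cisE a' image' by metis
  then have "transl g (cis \<alpha>) = cis \<phi>" unfolding c_def by simp
  moreover have "0 < sin \<alpha>" using \<alpha> bounds unfolding b_def d_def by (intro sin_gt_zero) auto
  ultimately have "tan (\<phi> / 2) = (tan (b / 2))\<^sup>2 * tan (\<alpha> / 2)"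
    unfolding b_def using tan_half_transl[OF g] by (metis less_irrefl)
  moreover have "tan (d - b / 2) < tan (\<phi> / 2)" using \<phi> bounds pi_gt3 by (intro tan_monotone) auto
  ultimately show ?thesis unfolding d_def b_def by simp
qed

lemma tan_bound_from_second_image:
  assumes g: "g \<ge> 2"
    and a: "a \<in> arc_oo (Pt g (theta g (i - 1))) (Qt g (theta g (i - 1)))"
    and \<alpha>: "pi - beta g < \<alpha>" "\<alpha> < pi - central_angle g + beta g"
    and image: "Tmap g (i - 1) (cis (side_dir g i - pi) * cis \<alpha>) \<in> arc_oc (Pt g (theta g (i - 1))) a"
  shows "tan (central_angle g - beta g / 2)
    < (tan (beta g / 2))\<^sup>2 * tan (pi - (\<alpha> + central_angle g) / 2)"
proof -
  define d b c where "d = central_angle g" and "b = beta g" and "c = cis (side_dir g (sigma g (i - 1)))"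
  have bounds: "0 < b" "b < pi / 2" "d / 2 < b" "b < d" "d \<le> pi / 6"
    unfolding b_def d_def using beta_bounds[OF g] half_central_angle_less_beta[OF g]
      beta_less_central_angle[OF g] central_angle_le[OF g] by auto
  have P: "Pt g (theta g (i - 1)) = c * cis (- d - b)" and "Qt g (theta g (i - 1)) = c * cis (- 2 * d + b)"
    using Pt_add[of g "sigma g (i - 1)" "- 1"] Qt_add[of g "sigma g (i - 1)" "- 1"]
    unfolding theta_def c_def d_def b_def by simp_all
  then have a': "a \<in> arc_oo (c * cis (- d - b)) (c * cis (- 2 * d + b))" using a by simp
  have x: "cis (side_dir g i - pi) * cis \<alpha> = cis (side_dir g (i - 1) - pi) * cis (\<alpha> + d)"
    using side_dir_add[of g "i - 1" 1] unfolding d_def by (simp add: cis_mult algebra_simps)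
  have image': "c * transl g (cis (\<alpha> + d)) \<in> arc_oc (c * cis (- d - b)) a"
    using image unfolding x Tmap_rotated P c_def .
  have "-pi < - d - b" "- d - b < - 2 * d + b" "- 2 * d + b \<le> pi" using bounds pi_gt3 by auto
  moreover have "cmod c = 1" unfolding c_def by simp
  ultimately obtain \<psi> where \<psi>: "c * transl g (cis (\<alpha> + d)) = c * cis \<psi>" "- d - b < \<psi>" "\<psi> < - 2 * d + b"
    using arc_oc_rotated_cisE a' image' by metis
  then have "transl g (cis (\<alpha> + d)) = cis \<psi>" unfolding c_def by simp
  moreover have "sin (\<alpha> + d) < 0" using \<alpha> bounds pi_gt3 unfolding b_def d_def by (intro sin_lt_zero) auto
  ultimately have "tan (\<psi> / 2) = (tan (b / 2))\<^sup>2 * tan ((\<alpha> + d) / 2)"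
    unfolding b_def using tan_half_transl[OF g] by (metis less_irrefl)
  moreover have "tan (\<psi> / 2) < tan (- (d - b / 2))" using \<psi> bounds pi_gt3 by (intro tan_monotone) auto
  then have "tan (\<psi> / 2) < - tan (d - b / 2)" by (simp only: tan_minus)
  moreover have "tan (pi - (\<alpha> + d) / 2) = - tan ((\<alpha> + d) / 2)"
    using tan_periodic_pi[of "- ((\<alpha> + d) / 2)"] by simp
  ultimately show ?thesis unfolding d_def b_def by simp
qed

lemma tan_mult_tan_half_le_1:
  fixes x y e :: real
  assumes "0 < x" "0 < y" "x + y = pi - e" "0 < e" "e < pi"
  shows "tan x * tan (e / 2) \<le> 1 \<or> tan y * tan (e / 2) \<le> 1"
proof -
  define m where "m = pi / 2 - e / 2"
  have t: "0 < tan (e / 2)" using assms by (intro tan_gt_zero) auto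
  have tm: "tan m * tan (e / 2) = 1" unfolding m_def tan_cot using t by simp
  have "tan z * tan (e / 2) \<le> 1" if "0 < z" "z \<le> m" for z
  proof -
    have "tan z \<le> tan m" using that assms unfolding m_def by (intro tan_mono_le) auto
    then show ?thesis using t tm by (metis mult_right_mono less_imp_le)
  qed
  moreover have "x \<le> m \<or> y \<le> m" using assms unfolding m_def by linarith
  ultimately show ?thesis using assms by blast
qed

lemma tan_half_image_bounds_incompatible:
  assumes g: "g \<ge> 2" and \<alpha>: "pi - beta g < \<alpha>" "\<alpha> < pi - central_angle g + beta g"
  shows "\<not> (tan (central_angle g - beta g / 2) < (tan (beta g / 2))\<^sup>2 * tan (\<alpha> / 2) \<and>
    tan (central_angle g - beta g / 2) < (tan (beta g / 2))\<^sup>2 * tan (pi - (\<alpha> + central_angle g) / 2))"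
    (is "\<not> ?bounds")
proof
  assume ?bounds
  define d b where "d = central_angle g" and "b = beta g"
  define T k q where "T = tan (d - b / 2)" and "k = (tan (b / 2))\<^sup>2" and "q = tan (d / 4)"
  have bounds: "T < k * tan (\<alpha> / 2)" "T < k * tan (pi - (\<alpha> + d) / 2)"
    using \<open>?bounds\<close> unfolding T_def k_def d_def b_def by auto
  have "0 < d" "b < d" "d \<le> pi / 6" "d / 2 < b"
    unfolding d_def b_def using central_angle_pos[OF g] beta_less_central_angle[OF g]
      central_angle_le[OF g] half_central_angle_less_beta[OF g] by auto
  moreover have "\<alpha> / 2 + (pi - (\<alpha> + d) / 2) = pi - d / 2" by (simp add: field_simps)
  ultimately have "tan (\<alpha> / 2) * tan (d / 2 / 2) \<le> 1 \<or> tan (pi - (\<alpha> + d) / 2) * tan (d / 2 / 2) \<le> 1"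
    using \<alpha> unfolding d_def b_def by (intro tan_mult_tan_half_le_1) auto
  then obtain X where X: "T < k * X" "X * q \<le> 1" using bounds unfolding q_def by auto
  have "0 < q" unfolding q_def using \<open>0 < d\<close> \<open>d \<le> pi / 6\<close> by (intro tan_gt_zero) auto
  then have "T * q < k * (X * q)" using X(1) by (simp add: mult.assoc)
  also have "\<dots> \<le> k" using X(2) mult_left_mono[of "X * q" 1 k] unfolding k_def by simp
  finally have "T * q < k" .
  moreover have "k \<le> q * T"
    using tan_half_beta_sq_le_tan_mult[OF g] unfolding k_def q_def T_def d_def b_def .
  ultimately show False by (simp add: mult.commute)
qed

theorem lemma3p5:
  fixes g i :: int and A :: "int \<Rightarrow> complex" and x :: complex
  assumes "g \<ge> 2"
    and "\<forall>j\<in>{1..nsides g}. A j \<in> arc_oo (Pt g j) (Qt g j)"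
    and "i \<in> {1..nsides g}"
    and "x \<in> arc_oo (Pt g i) (Qt g i)"
  shows "\<not> (Tmap g i x \<in> arc_co (A (idx g (rho g i + 1))) (Qt g (rho g i + 1)) \<and>
             Tmap g (i - 1) x \<in> arc_oc (Pt g (theta g (i - 1))) (A (idx g (theta g (i - 1)))))"
proof -
  \<comment> \<open>The argument works for every integer \<open>i\<close>.\<close>
  obtain \<alpha> where x: "x = cis (side_dir g i - pi) * cis \<alpha>"
    and \<alpha>: "pi - beta g < \<alpha>" "\<alpha> < pi - central_angle g + beta g"
    using side_arc_cisE[OF assms(1,4)] by metis
  have partition: "A (idx g k) \<in> arc_oo (Pt g k) (Qt g k)" for k
    using assms(1,2) by (intro arc_oo_idx) auto
  show ?thesis
    using tan_half_image_bounds_incompatible[OF assms(1) \<alpha>]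
      tan_bound_from_first_image[OF assms(1) partition \<alpha>]
      tan_bound_from_second_image[OF assms(1) partition \<alpha>]
    unfolding x by blast
qed

end
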